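(* For all coprime positive integers $a, b$, the binary word $\mathrm{gen}(a,b)$ has exactly $a+b-1$ distinct subsequences, i.e. $\mathsf{P}(\mathrm{gen}(a,b)) = a+b-1$.
   Context: Words are over the alphabet $\{\mathsf{A},\mathsf{B}\}$; $\mathsf{0}$ denotes the empty word and $\circ$ concatenation. $\mathsf{P}(\mathfrak{s})$ denotes the number of distinct words that are subsequences (not necessarily contiguous) of $\mathfrak{s}$, the empty word included. For coprime integers $a,b\ge 1$ the word $\mathrm{gen}(a,b)$ is defined recursively by: $\mathrm{gen}(1,1)=\mathsf{0}$; $\mathrm{gen}(a,b)=\mathsf{A}\circ\mathrm{gen}(a-b,b)$ if $a>b$; $\mathrm{gen}(a,b)=\mathsf{B}\circ\mathrm{gen}(a,b-a)$ if $b>a$ (this follows the Euclidean algorithm and is well defined). *)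

theory Defs
  imports Main "HOL-Library.Sublist"
begin

datatype letter = A | B

type_synonym word = "letter list"

definition P :: "word \<Rightarrow> nat" where
  "P s = card {u. subseq u s}"

text \<open>gen(a,b) following the Euclidean algorithm. Only meaningful for coprime a,b \<ge> 1;
  for other arguments the value is an arbitrary convention (Nil).\<close>
function gen :: "nat \<Rightarrow> nat \<Rightarrow> word" where
  "gen a b = (if a = 0 \<or> b = 0 \<or> a = b then []
              else if a > b then A # gen (a - b) b
              else B # gen a (b - a))"
  by auto
termination by (relation "measure (\<lambda>(a,b). a + b)") auto

end

theory Submission
  imports Defs
begin

text \<open>Count the nonempty subsequences of a word separately by their first letter. Prepending x
  to w makes the subsequences of x w starting with x correspond to all subsequences of w, and
  leaves those starting with the other letter unchanged. Along gen(a,b) the pair of counts thus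
  follows the subtractive Euclidean algorithm, so by induction gen(a,b) has a - 1 subsequences
  starting with A and b - 1 starting with B; adding the empty word gives a + b - 1.\<close>

definition card_subseqs_with_head :: "'a \<Rightarrow> 'a list \<Rightarrow> nat" where
  "card_subseqs_with_head x w = card {u. subseq (x # u) w}"

lemma finite_subseqs: "finite {u. subseq u w}"
  by (metis List.finite_set set_subseqs_eq)

lemma finite_subseqs_with_head: "finite {u. subseq (x # u) w}"
  by (rule finite_subset[OF _ finite_subseqs[of w]]) (auto dest: subseq_Cons')

lemma card_subseqs_with_head_Cons_same:
  "card_subseqs_with_head x (x # w) = card {u. subseq u w}"
  by (simp add: card_subseqs_with_head_def)

lemma card_subseqs_with_head_Cons_other:
  "x \<noteq> y \<Longrightarrow> card_subseqs_with_head x (y # w) = card_subseqs_with_head x w"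
  by (simp add: card_subseqs_with_head_def)

lemma P_eq_card_subseqs_with_head:
  "P w = 1 + card_subseqs_with_head A w + card_subseqs_with_head B w"
proof -
  let ?SA = "{u. subseq (A # u) w}" and ?SB = "{u. subseq (B # u) w}"
  have split: "{u. subseq u w} = insert [] (Cons A ` ?SA \<union> Cons B ` ?SB)"
  proof (rule set_eqI)
    fix u
    show "u \<in> {u. subseq u w} \<longleftrightarrow> u \<in> insert [] (Cons A ` ?SA \<union> Cons B ` ?SB)"
      by (cases u; cases "hd u") auto
  qed
  have "card {u. subseq u w} = 1 + card (Cons A ` ?SA \<union> Cons B ` ?SB)"
    unfolding split by (subst card_insert_disjoint) (auto intro: finite_subseqs_with_head)
  also have "\<dots> = 1 + card (Cons A ` ?SA) + card (Cons B ` ?SB)"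
    by (subst card_Un_disjoint) (auto intro: finite_subseqs_with_head)
  also have "\<dots> = 1 + card ?SA + card ?SB"
    by (simp add: card_image)
  finally show ?thesis
    unfolding P_def card_subseqs_with_head_def .
qed

lemma gen_eq_Cons_A: "0 < b \<Longrightarrow> b < a \<Longrightarrow> gen a b = A # gen (a - b) b"
  by simp

lemma gen_eq_Cons_B: "0 < a \<Longrightarrow> a < b \<Longrightarrow> gen a b = B # gen a (b - a)"
  by simp

declare gen.simps [simp del]

lemma card_subseqs_with_head_gen:
  assumes "a \<ge> 1" and "b \<ge> 1" and "coprime a b"
  shows "card_subseqs_with_head A (gen a b) = a - 1 \<and> card_subseqs_with_head B (gen a b) = b - 1"
  using assms
proof (induction a b rule: gen.induct)
  case (1 a b)
  then have "a \<ge> 1" "b \<ge> 1" "coprime a b"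
    by simp_all
  consider (equal) "a = b" | (left) "b < a" | (right) "a < b"
    by linarith
  then show ?case
  proof cases
    case equal
    with \<open>coprime a b\<close> have "a = 1"
      by simp
    with equal show ?thesis
      by (simp add: gen.simps card_subseqs_with_head_def)
  next
    case left
    have "coprime (a - b) b"
      using \<open>coprime a b\<close> left by (simp add: coprime_iff_gcd_eq_1 gcd_diff1_nat)
    then have IH: "card_subseqs_with_head A (gen (a - b) b) = a - b - 1"
      "card_subseqs_with_head B (gen (a - b) b) = b - 1"
      using "1.IH"(1) left \<open>b \<ge> 1\<close> by simp_all
    have "card_subseqs_with_head A (gen a b) = P (gen (a - b) b)"
      using left \<open>b \<ge> 1\<close> by (simp add: gen_eq_Cons_A card_subseqs_with_head_Cons_same P_def)
    also have "\<dots> = a - 1"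
      using IH left \<open>b \<ge> 1\<close> by (simp add: P_eq_card_subseqs_with_head)
    finally show ?thesis
      using IH left \<open>b \<ge> 1\<close> by (simp add: gen_eq_Cons_A card_subseqs_with_head_Cons_other)
  next
    case right
    have "coprime a (b - a)"
      using \<open>coprime a b\<close> right
      by (metis coprime_commute coprime_iff_gcd_eq_1 gcd_diff1_nat less_imp_le)
    then have IH: "card_subseqs_with_head A (gen a (b - a)) = a - 1"
      "card_subseqs_with_head B (gen a (b - a)) = b - a - 1"
      using "1.IH"(2) right \<open>a \<ge> 1\<close> by simp_all
    have "card_subseqs_with_head B (gen a b) = P (gen a (b - a))"
      using right \<open>a \<ge> 1\<close> by (simp add: gen_eq_Cons_B card_subseqs_with_head_Cons_same P_def)
    also have "\<dots> = b - 1"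
      using IH right \<open>a \<ge> 1\<close> by (simp add: P_eq_card_subseqs_with_head)
    finally show ?thesis
      using IH right \<open>a \<ge> 1\<close> by (simp add: gen_eq_Cons_B card_subseqs_with_head_Cons_other)
  qed
qed

theorem theorem1:
  fixes a b :: nat
  assumes "a \<ge> 1" and "b \<ge> 1" and "coprime a b"
  shows "P (gen a b) = a + b - 1"
  using card_subseqs_with_head_gen[OF assms] assms by (simp add: P_eq_card_subseqs_with_head)

end
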